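(* Let $\div$ be an AGM contraction operator for epistemic states. Then $\div$ satisfies (C8) if and only if it satisfies (C8$_{\mathrm{cond}}$), and $\div$ satisfies (C9) if and only if it satisfies (C9$_{\mathrm{cond}}$), where, for all epistemic states $\Psi$ and formulas $\alpha,\beta,\gamma$: (C8) if $\neg\alpha\models\beta$ then $\mathrm{Bel}(\Psi\div\alpha\div\beta) =_\alpha \mathrm{Bel}(\Psi\div\beta)$; (C9) if $\alpha\models\beta$ then $\mathrm{Bel}(\Psi\div\alpha\div\beta) =_{\neg\beta} \mathrm{Bel}(\Psi\div\beta)$; (C8$_{\mathrm{cond}}$) if $\neg\alpha\models\beta$ then $\Psi\div\alpha\models(\gamma\lor\neg\alpha\,\|\,\beta) \Leftrightarrow \Psi\models(\gamma\lor\neg\alpha\,\|\,\beta)$; (C9$_{\mathrm{cond}}$) if $\alpha\models\beta$ then $\Psi\div\alpha\models(\gamma\lor\beta\,\|\,\beta) \Leftrightarrow \Psi\models(\gamma\lor\beta\,\|\,\beta)$.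
   Context: $\Sigma$ is a nonempty finite set of propositional variables, $\mathcal{L}$ the propositional language over $\Sigma$, $\Omega$ the set of worlds. $[\![\alpha]\!]$ is the set of models of $\alpha$; for a set $X$ of formulas $[\![X]\!]$ is the set of worlds satisfying all of $X$; $Cn(X)=\{\beta\mid X\models\beta\}$. $\mathcal{E}$ is a set of epistemic states; each $\Psi\in\mathcal{E}$ has a deductively closed belief set $\mathrm{Bel}(\Psi)\subseteq\mathcal{L}$; $\Psi\models\alpha$ iff $\alpha\in\mathrm{Bel}(\Psi)$; $[\![\Psi]\!]=[\![\mathrm{Bel}(\Psi)]\!]$. A belief change operator is a map $\div:\mathcal{E}\times\mathcal{L}\to\mathcal{E}$; $\Psi\div\alpha\div\beta$ means $(\Psi\div\alpha)\div\beta$. An AGM contraction operator for epistemic states is a belief change operator satisfying for all $\Psi,\alpha,\beta$: (C1) $\mathrm{Bel}(\Psi\div\alpha)\subseteq\mathrm{Bel}(\Psi)$; (C2) if $\alpha\notin\mathrm{Bel}(\Psi)$ then $\mathrm{Bel}(\Psi)\subseteq\mathrm{Bel}(\Psi\div\alpha)$; (C3) if $\alpha\not\equiv\top$ then $\alpha\notin\mathrm{Bel}(\Psi\div\alpha)$; (C4) $\mathrm{Bel}(\Psi)\subseteq Cn(\mathrm{Bel}(\Psi\div\alpha)\cup\{\alpha\})$; (C5) if $\alpha\equiv\beta$ then $\mathrm{Bel}(\Psi\div\alpha)=\mathrm{Bel}(\Psi\div\beta)$; (C6) $\mathrm{Bel}(\Psi\div\alpha)\cap\mathrm{Bel}(\Psi\div\beta)\subseteq\mathrm{Bel}(\Psi\div(\alpha\land\beta))$;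 (C7) if $\beta\notin\mathrm{Bel}(\Psi\div(\alpha\land\beta))$ then $\mathrm{Bel}(\Psi\div(\alpha\land\beta))\subseteq\mathrm{Bel}(\Psi\div\beta)$. Contractionals (relative to the fixed operator $\div$): $\Psi$ accepts the contractional $(\beta\,\|\,\alpha)$, written $\Psi\models(\beta\,\|\,\alpha)$, iff $\Psi\div\alpha\models\beta$. $\alpha$-equivalence: for $\Omega_1,\Omega_2\subseteq\Omega$, $\Omega_1=_\alpha\Omega_2$ iff $\Omega_1\cap[\![\alpha]\!]=\Omega_2\cap[\![\alpha]\!]$; for sets of formulas $X=_\alpha Y$ iff $[\![X]\!]=_\alpha[\![Y]\!]$. *)

theory Defs
  imports Main
begin

datatype 'v fml = Atom 'v | FFalse | FTrue | FNot "'v fml" | FAnd "'v fml" "'v fml"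
  | FOr "'v fml" "'v fml" | FImp "'v fml" "'v fml"

type_synonym 'v world = "'v \<Rightarrow> bool"

fun sat :: "'v world \<Rightarrow> 'v fml \<Rightarrow> bool" where
  "sat w (Atom p) = w p"
| "sat w FFalse = False"
| "sat w FTrue = True"
| "sat w (FNot a) = (\<not> sat w a)"
| "sat w (FAnd a b) = (sat w a \<and> sat w b)"
| "sat w (FOr a b) = (sat w a \<or> sat w b)"
| "sat w (FImp a b) = (sat w a \<longrightarrow> sat w b)"

definition mods :: "'v fml \<Rightarrow> 'v world set" where
  "mods a = {w. sat w a}"

definition modsS :: "'v fml set \<Rightarrow> 'v world set" where
  "modsS X = {w. \<forall>x\<in>X. sat w x}"

definition fentails :: "'v fml \<Rightarrow> 'v fml \<Rightarrow> bool" where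
  "fentails a b \<longleftrightarrow> mods a \<subseteq> mods b"

definition Cn :: "'v fml set \<Rightarrow> 'v fml set" where
  "Cn X = {b. modsS X \<subseteq> mods b}"

definition fequiv :: "'v fml \<Rightarrow> 'v fml \<Rightarrow> bool" where
  "fequiv a b \<longleftrightarrow> mods a = mods b"

definition world_eq_on :: "'v fml \<Rightarrow> 'v world set \<Rightarrow> 'v world set \<Rightarrow> bool" where
  "world_eq_on a O1 O2 \<longleftrightarrow> O1 \<inter> mods a = O2 \<inter> mods a"

definition fset_eq_on :: "'v fml \<Rightarrow> 'v fml set \<Rightarrow> 'v fml set \<Rightarrow> bool" where
  "fset_eq_on a X Y \<longleftrightarrow> world_eq_on a (modsS X) (modsS Y)"

text \<open>AGM contraction postulates (C1)-(C7) for epistemic states of type 'e,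
  with belief-set function Bel and change operator c.\<close>
definition agm_contraction :: "('e \<Rightarrow> 'v fml set) \<Rightarrow> ('e \<Rightarrow> 'v fml \<Rightarrow> 'e) \<Rightarrow> bool" where
  "agm_contraction Bel c \<longleftrightarrow>
     (\<forall>\<Psi> a. Bel (c \<Psi> a) \<subseteq> Bel \<Psi>) \<and>
     (\<forall>\<Psi> a. a \<notin> Bel \<Psi> \<longrightarrow> Bel \<Psi> \<subseteq> Bel (c \<Psi> a)) \<and>
     (\<forall>\<Psi> a. \<not> fequiv a FTrue \<longrightarrow> a \<notin> Bel (c \<Psi> a)) \<and>
     (\<forall>\<Psi> a. Bel \<Psi> \<subseteq> Cn (Bel (c \<Psi> a) \<union> {a})) \<and>
     (\<forall>\<Psi> a b. fequiv a b \<longrightarrow> Bel (c \<Psi> a) = Bel (c \<Psi> b)) \<and>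
     (\<forall>\<Psi> a b. Bel (c \<Psi> a) \<inter> Bel (c \<Psi> b) \<subseteq> Bel (c \<Psi> (FAnd a b))) \<and>
     (\<forall>\<Psi> a b. b \<notin> Bel (c \<Psi> (FAnd a b)) \<longrightarrow> Bel (c \<Psi> (FAnd a b)) \<subseteq> Bel (c \<Psi> b))"

text \<open>Acceptance of the contractional (b || a): Psi accepts it iff (Psi contracted by a) believes b.\<close>
definition accepts :: "('e \<Rightarrow> 'v fml set) \<Rightarrow> ('e \<Rightarrow> 'v fml \<Rightarrow> 'e) \<Rightarrow> 'e \<Rightarrow> 'v fml \<Rightarrow> 'v fml \<Rightarrow> bool" where
  "accepts Bel c \<Psi> b a \<longleftrightarrow> b \<in> Bel (c \<Psi> a)"

definition C8 :: "('e \<Rightarrow> 'v fml set) \<Rightarrow> ('e \<Rightarrow> 'v fml \<Rightarrow> 'e) \<Rightarrow> bool" where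
  "C8 Bel c \<longleftrightarrow> (\<forall>\<Psi> a b. fentails (FNot a) b \<longrightarrow>
      fset_eq_on a (Bel (c (c \<Psi> a) b)) (Bel (c \<Psi> b)))"

definition C9 :: "('e \<Rightarrow> 'v fml set) \<Rightarrow> ('e \<Rightarrow> 'v fml \<Rightarrow> 'e) \<Rightarrow> bool" where
  "C9 Bel c \<longleftrightarrow> (\<forall>\<Psi> a b. fentails a b \<longrightarrow>
      fset_eq_on (FNot b) (Bel (c (c \<Psi> a) b)) (Bel (c \<Psi> b)))"

definition C8cond :: "('e \<Rightarrow> 'v fml set) \<Rightarrow> ('e \<Rightarrow> 'v fml \<Rightarrow> 'e) \<Rightarrow> bool" where
  "C8cond Bel c \<longleftrightarrow> (\<forall>\<Psi> a b g. fentails (FNot a) b \<longrightarrow>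
      (accepts Bel c (c \<Psi> a) (FOr g (FNot a)) b \<longleftrightarrow> accepts Bel c \<Psi> (FOr g (FNot a)) b))"

definition C9cond :: "('e \<Rightarrow> 'v fml set) \<Rightarrow> ('e \<Rightarrow> 'v fml \<Rightarrow> 'e) \<Rightarrow> bool" where
  "C9cond Bel c \<longleftrightarrow> (\<forall>\<Psi> a b g. fentails a b \<longrightarrow>
      (accepts Bel c (c \<Psi> a) (FOr g b) b \<longleftrightarrow> accepts Bel c \<Psi> (FOr g b) b))"

end

theory Submission
  imports Defs
begin

text \<open>For deductively closed belief sets, \<open>X =\<^sub>\<alpha> Y\<close> says exactly that X and Y contain the same
  formulas of the form \<open>\<gamma> \<or> \<not>\<alpha>\<close>: such a formula belongs to X iff \<open>\<gamma>\<close> holds on the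
  \<open>\<alpha>\<close>-worlds of X, and conversely the \<open>\<alpha>\<close>-worlds of X are cut out by exactly these formulas.
  Taking \<open>\<alpha>\<close> resp. \<open>\<not>\<beta>\<close> (with \<open>\<beta>\<close> as complement of \<open>\<not>\<beta>\<close>), (C8) and (C9) become their
  conditional forms verbatim.\<close>

lemma mem_closed_iff:
  assumes "X = Cn X"
  shows "x \<in> X \<longleftrightarrow> modsS X \<subseteq> mods x"
  using assms by (metis Cn_def mem_Collect_eq)

lemma mods_FOr: "mods (FOr g n) = mods g \<union> mods n"
  by (auto simp: mods_def)

lemma mods_FNot: "mods (FNot a) = - mods a"
  by (auto simp: mods_def)

lemma closed_mem_FOr_iff:
  assumes "X = Cn X" and "mods n = - mods a"
  shows "FOr g n \<in> X \<longleftrightarrow> modsS X \<inter> mods a \<subseteq> mods g"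
  using assms by (auto simp: mem_closed_iff mods_FOr)

lemma closed_modsS_inter_eq:
  assumes closed: "X = Cn X" and compl: "mods n = - mods a"
  shows "modsS X \<inter> mods a = modsS {g. FOr g n \<in> X} \<inter> mods a"
proof
  show "modsS X \<inter> mods a \<subseteq> modsS {g. FOr g n \<in> X} \<inter> mods a"
    using closed_mem_FOr_iff[OF assms] by (auto simp: modsS_def mods_def)
next
  have "FOr x n \<in> X" if "x \<in> X" for x
    using that closed compl by (auto simp: mem_closed_iff mods_FOr)
  then show "modsS {g. FOr g n \<in> X} \<inter> mods a \<subseteq> modsS X \<inter> mods a"
    by (auto simp: modsS_def mods_def)
qed

lemma closed_fset_eq_on_iff:
  assumes "X = Cn X" and "Y = Cn Y" and "mods n = - mods a"
  shows "fset_eq_on a X Y \<longleftrightarrow> (\<forall>g. FOr g n \<in> X \<longleftrightarrow> FOr g n \<in> Y)"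
proof
  assume "fset_eq_on a X Y"
  then show "\<forall>g. FOr g n \<in> X \<longleftrightarrow> FOr g n \<in> Y"
    using assms by (simp add: fset_eq_on_def world_eq_on_def closed_mem_FOr_iff)
next
  assume "\<forall>g. FOr g n \<in> X \<longleftrightarrow> FOr g n \<in> Y"
  then have "{g. FOr g n \<in> X} = {g. FOr g n \<in> Y}"
    by blast
  then show "fset_eq_on a X Y"
    using assms by (simp add: fset_eq_on_def world_eq_on_def closed_modsS_inter_eq)
qed

theorem mainTheorem6:
  fixes Bel :: "'e \<Rightarrow> ('v::finite) fml set"
    and c :: "'e \<Rightarrow> 'v fml \<Rightarrow> 'e"
  assumes closed: "\<forall>\<Psi>. Bel \<Psi> = Cn (Bel \<Psi>)"
    and agm: "agm_contraction Bel c"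
  shows "(C8 Bel c \<longleftrightarrow> C8cond Bel c) \<and> (C9 Bel c \<longleftrightarrow> C9cond Bel c)"
proof -
  have eq_on_a: "fset_eq_on a (Bel P) (Bel Q) \<longleftrightarrow>
      (\<forall>g. FOr g (FNot a) \<in> Bel P \<longleftrightarrow> FOr g (FNot a) \<in> Bel Q)" for a P Q
    using closed by (simp add: closed_fset_eq_on_iff mods_FNot)
  have eq_on_not_b: "fset_eq_on (FNot b) (Bel P) (Bel Q) \<longleftrightarrow>
      (\<forall>g. FOr g b \<in> Bel P \<longleftrightarrow> FOr g b \<in> Bel Q)" for b P Q
    using closed by (simp add: closed_fset_eq_on_iff mods_FNot)
  have "C8 Bel c \<longleftrightarrow> C8cond Bel c"
    unfolding C8_def C8cond_def accepts_def eq_on_a by blast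
  moreover have "C9 Bel c \<longleftrightarrow> C9cond Bel c"
    unfolding C9_def C9cond_def accepts_def eq_on_not_b by blast
  ultimately show ?thesis ..
qed

end
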